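(* Let $(P_X,P_{Y|X})$ be an input/channel pair and let $(P_\Theta,P_{\Phi|\Theta})$ be the corresponding normalized input/channel pair. Then: (i) $\Phi\sim\mathcal U$; (ii) $I(\Theta;\Phi)=I(X;Y)$; (iii) the joint distribution $P_{\Theta\Phi}$ is proper (absolutely continuous w.r.t. Lebesgue measure on $(0,1)^2$); (iv) the conditional c.d.f. $F_{\Theta|\Phi}(\theta|\phi)$ is continuous in $\theta$ for $P_\Phi$-almost all $\phi\in(0,1)$.
   Context: All real r.v.'s are mixtures of absolutely continuous and discrete parts; $F_X$ is a c.d.f., $F_X^{-1}(t)=\inf\{x:F_X(x)>t\}$, $P_Y(\{y\})=\Pr(Y=y)$, $\mathcal U$ is the uniform distribution on $(0,1)$. An input/channel pair $(P_X,P_{Y|X})$ consists of a memoryless channel $P_{Y|X}$ and a distribution $P_X$ supported in its input alphabet with $I(X;Y)<\infty$; $P_Y$ is the induced output distribution. Normalized channel: let $\Theta\sim\mathcal U$; given $\Theta=\theta$ let $Y\sim P_{Y|X}(\cdot|F_X^{-1}(\theta))$; let $\Lambda\sim\mathcal U$ be independent of $(\Theta,Y)$; set $\Phi=F_Y(Y)-P_Y(\{Y\})\Lambda$. $P_{\Phi|\Theta}$ is the normalized channel and $P_\Theta=\mathcal U$ the normalized input. *)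

theory Defs
  imports "HOL-Probability.Probability"
begin

definition quantile :: "(real \<Rightarrow> real) \<Rightarrow> real \<Rightarrow> real" where
  "quantile F t = Inf {x. F x > t}"

definition unif01 :: "real measure" where
  "unif01 = uniform_measure lborel {0<..<1}"

text \<open>Relative entropy D(P||Q) in nats, valued in the extended reals:
  +infinity unless P is absolutely continuous w.r.t. Q; otherwise
  the integral of f ln f with f = dP/dQ (its negative part is always finite).\<close>
definition KL_div :: "'a measure \<Rightarrow> 'a measure \<Rightarrow> ereal" where
  "KL_div P Q = (if absolutely_continuous Q P then
     (let f = (\<lambda>x. enn2real (RN_deriv Q P x)) in
       enn2ereal (\<integral>\<^sup>+ x. ennreal (f x * ln (f x)) \<partial>Q)
       - enn2ereal (\<integral>\<^sup>+ x. ennreal (- (f x * ln (f x))) \<partial>Q))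
   else \<infinity>)"

definition mutual_info :: "(real \<times> real) measure \<Rightarrow> ereal" where
  "mutual_info J = KL_div J (distr J borel fst \<Otimes>\<^sub>M distr J borel snd)"

definition joint_dist :: "real measure \<Rightarrow> (real \<Rightarrow> real measure) \<Rightarrow> (real \<times> real) measure" where
  "joint_dist PX K = PX \<bind> (\<lambda>x. K x \<bind> (\<lambda>y. return (borel \<Otimes>\<^sub>M borel) (x, y)))"

definition output_dist :: "real measure \<Rightarrow> (real \<Rightarrow> real measure) \<Rightarrow> real measure" where
  "output_dist PX K = PX \<bind> K"

text \<open>Joint distribution of (Theta, Phi) of the normalized input/channel pair:
  Theta ~ U, Y | Theta=th ~ K (F_X^{-1} th), Lambda ~ U independent,
  Phi = F_Y(Y) - P_Y({Y}) Lambda.\<close>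
definition norm_joint :: "real measure \<Rightarrow> (real \<Rightarrow> real measure) \<Rightarrow> (real \<times> real) measure" where
  "norm_joint PX K =
     unif01 \<bind> (\<lambda>th. K (quantile (cdf PX) th) \<bind> (\<lambda>y. unif01 \<bind> (\<lambda>l.
       return (borel \<Otimes>\<^sub>M borel)
         (th, cdf (output_dist PX K) y - measure (output_dist PX K) {y} * l))))"

end

theory Submission
  imports Defs
begin

(* For a real distribution P write Q_P = quantile (cdf P) and let
   T_P(y,l) = cdf P y - P{y} * l be its randomized distributional transform.  The central
   fact (rdt_quantile_coupling) is that for Y ~ P and an independent Lambda ~ U the pair
   (T_P(Y,Lambda), Y) has the law of (U, Q_P(U)) for U ~ U.  Applied to the input
   coordinate it shows that the normalized pair (Theta, Phi) has the law of
   (T_X(X,Lambda'), T_Y(Y,Lambda)) with (X,Y) ~ P_XY (normalized_joint_transform); applied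
   to both coordinates of P_X x P_Y it shows that, with f = dP_XY / d(P_X x P_Y), the
   normalized joint law has the density g(theta,phi) = f(Q_X theta, Q_Y phi) with respect
   to U x U, and that integrals of functions of f are preserved.  This gives (i) uniform
   marginals, (ii) equality of the relative entropies and (iii) absolute continuity.  For
   (iv), a density on the unit square with uniform second marginal yields a conditional
   kernel with atomless conditional laws; every other kernel representing the same joint
   law agrees with it almost surely on all rational half-lines, hence has the same c.d.f. *)

section \<open>The uniform distribution on the unit interval\<close>

lemma sets_unif01 [simp, measurable_cong]: "sets unif01 = sets borel"
  by (simp add: unif01_def)

lemma space_unif01 [simp]: "space unif01 = UNIV"
  by (simp add: unif01_def)

lemma prob_space_unif01: "prob_space unif01"
  unfolding unif01_def by (rule prob_space_uniform_measure) auto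

interpretation U: prob_space unif01
  by (rule prob_space_unif01)

lemma emeasure_unif01_UNIV [simp]: "emeasure unif01 UNIV = 1"
  using U.emeasure_space_1 by simp

lemma measurable_const_unif01 [measurable]: "(\<lambda>x. unif01) \<in> M \<rightarrow>\<^sub>M prob_algebra borel"
  by (rule measurable_const) (simp add: space_prob_algebra prob_space_unif01)

lemma emeasure_unif01: "A \<in> sets borel \<Longrightarrow> emeasure unif01 A = emeasure lborel (A \<inter> {0<..<1})"
  unfolding unif01_def
  by (subst emeasure_uniform_measure) (auto simp: Int_commute divide_ennreal_def)

lemma nn_integral_unif01:
  "f \<in> borel_measurable borel \<Longrightarrow>
   (\<integral>\<^sup>+x. f x \<partial>unif01) = (\<integral>\<^sup>+x. f x * indicator {0<..<1} x \<partial>lborel)"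
  unfolding unif01_def by (subst nn_integral_uniform_measure) (auto simp: divide_ennreal_def)

lemma AE_unif01: "AE x in unif01. 0 < x \<and> x < 1"
  unfolding unif01_def by (rule AE_uniform_measureI) auto

lemma emeasure_unif01_singleton [simp]: "emeasure unif01 {t} = 0"
proof -
  have "emeasure unif01 {t} = emeasure lborel ({t} \<inter> {0<..<1})"
    by (simp add: emeasure_unif01)
  also have "\<dots> \<le> emeasure lborel {t}"
    by (intro emeasure_mono) auto
  finally show ?thesis by simp
qed

lemma pair_prob_spaceI: "prob_space M1 \<Longrightarrow> prob_space M2 \<Longrightarrow> pair_prob_space M1 M2"
  by (intro pair_prob_space.intro pair_sigma_finite.intro prob_space_imp_sigma_finite)

abbreviation UU :: "(real \<times> real) measure" where
  "UU \<equiv> unif01 \<Otimes>\<^sub>M unif01"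

interpretation UU: pair_prob_space unif01 unif01
  by (intro pair_prob_spaceI prob_space_unif01)

lemma sets_UU [measurable_cong]: "sets UU = sets (borel \<Otimes>\<^sub>M borel)"
  by (rule sets_pair_measure_cong) simp_all

lemma absolutely_continuous_lborel_UU: "absolutely_continuous (lborel \<Otimes>\<^sub>M lborel) UU"
  unfolding absolutely_continuous_def
proof
  fix N :: "(real \<times> real) set" assume N: "N \<in> null_sets (lborel \<Otimes>\<^sub>M lborel)"
  hence [measurable]: "N \<in> sets (borel \<Otimes>\<^sub>M borel)"
    by (simp add: null_sets_def sets_pair_measure_cong[OF sets_lborel sets_lborel])
  have slice: "(\<integral>\<^sup>+ y. indicator N (x, y) \<partial>unif01) \<le> (\<integral>\<^sup>+ y. indicator N (x, y) \<partial>lborel)" for x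
    by (subst nn_integral_unif01) (auto simp: indicator_def intro!: nn_integral_mono)
  have "emeasure UU N = (\<integral>\<^sup>+ x. \<integral>\<^sup>+ y. indicator N (x, y) \<partial>unif01 \<partial>unif01)"
    by (subst U.nn_integral_fst) (simp_all add: sets_UU cong: measurable_cong_sets)
  also have "\<dots> \<le> (\<integral>\<^sup>+ x. \<integral>\<^sup>+ y. indicator N (x, y) \<partial>lborel \<partial>unif01)"
    by (intro nn_integral_mono slice)
  also have "\<dots> \<le> (\<integral>\<^sup>+ x. \<integral>\<^sup>+ y. indicator N (x, y) \<partial>lborel \<partial>lborel)"
    by (subst nn_integral_unif01) (auto intro!: nn_integral_mono simp: indicator_def)
  also have "\<dots> = emeasure (lborel \<Otimes>\<^sub>M lborel) N"
    using N by (subst lborel.nn_integral_fst) (simp_all add: null_sets_def)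
  also have "\<dots> = 0"
    using N by (rule null_setsD1)
  finally show "N \<in> null_sets UU"
    by (simp add: null_sets_def sets_UU)
qed

section \<open>Measures on the plane are determined by their values on quadrants\<close>

lemma sets_pair_borel_quadrants:
  "sets (borel \<Otimes>\<^sub>M borel :: (real \<times> real) measure)
   = sigma_sets UNIV {a \<times> b | a b. a \<in> range atMost \<and> b \<in> range atMost}"
proof -
  define C :: "real set set" where "C = range (\<lambda>n::nat. {..real n})"
  have cover: "\<Union>C = UNIV"
  proof -
    have "x \<in> \<Union>C" for x :: real
      using real_arch_simple[of x] by (auto simp: C_def)
    thus ?thesis by auto
  qed
  have borel_atMost: "sets (borel :: real measure) = sigma_sets UNIV (range atMost)"
    by (subst borel_eq_atMost) (simp add: sets_measure_of)
  have "sets (borel \<Otimes>\<^sub>M borel :: (real \<times> real) measure)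
      = sets (sigma UNIV {a \<times> b | a b. a \<in> range atMost \<and> b \<in> range atMost})"
    using cover by (subst sets_pair_eq[where Ca=C and Cb=C]) (auto simp: borel_atMost C_def)
  thus ?thesis by (simp add: sets_measure_of)
qed

lemma measure_eqI_quadrants:
  fixes M N :: "(real \<times> real) measure"
  assumes sets: "sets M = sets (borel \<Otimes>\<^sub>M borel)" "sets N = sets (borel \<Otimes>\<^sub>M borel)"
    and eq: "\<And>a b. emeasure M ({..a} \<times> {..b}) = emeasure N ({..a} \<times> {..b})"
    and fin: "\<And>a b. emeasure M ({..a} \<times> {..b}) \<noteq> \<infinity>"
  shows "M = N"
proof (rule measure_eqI_generator_eq[where \<Omega>=UNIV and A="\<lambda>n. {..real n} \<times> {..real n}"])
  let ?E = "{a \<times> b | a b. a \<in> range (atMost :: real \<Rightarrow> real set) \<and> b \<in> range (atMost :: real \<Rightarrow> real set)}"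
  show "Int_stable ?E"
  proof (rule Int_stableI)
    fix X Y assume "X \<in> ?E" "Y \<in> ?E"
    then obtain a b c d :: real where "X = {..a} \<times> {..b}" "Y = {..c} \<times> {..d}"
      by auto
    hence "X \<inter> Y = {..min a c} \<times> {..min b d}" by auto
    thus "X \<inter> Y \<in> ?E" by auto
  qed
  show "\<And>X. X \<in> ?E \<Longrightarrow> emeasure M X = emeasure N X"
    using eq by auto
  show "range (\<lambda>n. {..real n} \<times> {..real n}) \<subseteq> ?E"
    by auto
  show "(\<Union>n. {..real n} \<times> {..real n}) = (UNIV :: (real \<times> real) set)"
  proof -
    have "(x, y) \<in> (\<Union>n. {..real n} \<times> {..real n})" for x y :: real
      using real_arch_simple[of "max x y"] by auto
    thus ?thesis by auto
  qed
  show "sets M = sigma_sets UNIV ?E" "sets N = sigma_sets UNIV ?E"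
    using sets by (simp_all add: sets_pair_borel_quadrants)
qed (use fin in auto)

section \<open>Quantile functions\<close>

context
  fixes P :: "real measure"
  assumes P: "real_distribution P"
begin

interpretation P: cdf_distribution P
  using P by (simp add: cdf_distribution_def)

text \<open>Superlevel sets of the c.d.f.\ at levels in (0,1) are nonempty and bounded below, so the
  infimum defining the quantile is a genuine real number there.\<close>

lemma cdf_exceeds: "u < 1 \<Longrightarrow> \<exists>x. u < cdf P x"
  using order_tendstoD(1)[OF P.cdf_lim_at_top_prob, of u]
  by (metis eventually_happens' trivial_limit_at_top_linorder)

lemma bdd_below_cdf_superlevel:
  assumes "0 < u" "u < 1"
  shows "bdd_below {x. u < cdf P x}"
proof (rule bdd_belowI[of _ "P.I u"])
  fix x assume "x \<in> {x. u < cdf P x}"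
  thus "P.I u \<le> x" using P.pseudoinverse[of u x] assms by simp
qed

lemma quantile_le: "0 < u \<Longrightarrow> u < 1 \<Longrightarrow> u < cdf P b \<Longrightarrow> quantile (cdf P) u \<le> b"
  unfolding quantile_def by (rule cInf_lower) (auto intro: bdd_below_cdf_superlevel)

lemma le_cdf_if_quantile_le:
  assumes u: "0 < u" "u < 1" and q: "quantile (cdf P) u \<le> b"
  shows "u \<le> cdf P b"
proof (rule ccontr)
  assume "\<not> u \<le> cdf P b"
  define u' where "u' = (cdf P b + u) / 2"
  have u': "0 < u'" "u' < 1" "cdf P b < u'" "u' < u"
    using \<open>\<not> u \<le> cdf P b\<close> u P.cdf_nonneg[of b] by (auto simp: u'_def)
  have "P.I u' \<le> quantile (cdf P) u"
    unfolding quantile_def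
  proof (rule cInf_greatest)
    show "{x. u < cdf P x} \<noteq> {}" using cdf_exceeds[OF u(2)] by auto
    fix x assume "x \<in> {x. u < cdf P x}"
    thus "P.I u' \<le> x" using P.pseudoinverse[of u' x] u' by auto
  qed
  moreover have "\<not> P.I u' \<le> b" using P.pseudoinverse[of u' b] u' by auto
  ultimately show False using q by auto
qed

lemma quantile_le_iff:
  "0 < u \<Longrightarrow> u < 1 \<Longrightarrow> u \<noteq> cdf P b \<Longrightarrow> quantile (cdf P) u \<le> b \<longleftrightarrow> u < cdf P b"
  using quantile_le[of u b] le_cdf_if_quantile_le[of u b] by auto

lemma quantile_mono:
  assumes "0 < u" "u \<le> v" "v < 1"
  shows "quantile (cdf P) u \<le> quantile (cdf P) v"
  unfolding quantile_def
proof (rule cInf_superset_mono)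
  show "{x. v < cdf P x} \<noteq> {}" using cdf_exceeds[OF assms(3)] by blast
  show "bdd_below {x. u < cdf P x}" using assms by (intro bdd_below_cdf_superlevel) auto
  show "{x. v < cdf P x} \<subseteq> {x. u < cdf P x}" using assms(2) by auto
qed

text \<open>The quantile function is constant below 0 and above 1 and monotone in between.\<close>

lemma measurable_quantile [measurable]: "quantile (cdf P) \<in> borel_measurable borel"
proof -
  have low: "{x. u < cdf P x} = UNIV" if "u < 0" for u
    by (auto intro: less_le_trans[OF that P.cdf_nonneg])
  have high: "{x. u < cdf P x} = {}" if "1 \<le> u" for u
    by (auto simp: not_less intro: order_trans[OF P.cdf_bounded_prob that])
  have "mono_on {..<0} (quantile (cdf P))"
    by (rule mono_onI) (simp add: quantile_def low)
  moreover have "mono_on {0} (quantile (cdf P))"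
    by (rule mono_onI) simp
  moreover have "mono_on {0<..<1} (quantile (cdf P))"
    by (rule mono_onI) (auto intro: quantile_mono)
  moreover have "mono_on {1..} (quantile (cdf P))"
    by (rule mono_onI) (simp add: quantile_def high)
  moreover have "\<Union>{{..<0}, {0}, {0<..<1}, {1..}} = (UNIV :: real set)"
    by auto
  ultimately show ?thesis
    by (intro borel_measurable_piecewise_mono[of "{{..<0}, {0}, {0<..<1}, {1..}}"]) auto
qed

lemma measurable_cdf [measurable]: "cdf P \<in> borel_measurable borel"
  by (rule P.measurable_C)

lemma cdf_eq_lessThan_plus_atom: "cdf P y = measure P {..<y} + measure P {y}"
proof -
  have "{..y} = {..<y} \<union> {y}" by auto
  moreover have "measure P ({..<y} \<union> {y}) = measure P {..<y} + measure P {y}"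
    by (rule P.finite_measure_Union) auto
  ultimately show ?thesis by (simp add: cdf_def)
qed

lemma measurable_atom [measurable]: "(\<lambda>y. measure P {y}) \<in> borel_measurable borel"
proof -
  have "(\<lambda>y. measure P {..<y}) \<in> borel_measurable borel"
    by (intro borel_measurable_mono monoI P.finite_measure_mono) auto
  moreover have "(\<lambda>y. measure P {y}) = (\<lambda>y. cdf P y - measure P {..<y})"
    using cdf_eq_lessThan_plus_atom by fastforce
  ultimately show ?thesis by simp
qed

end

section \<open>The randomized distributional transform\<close>

text \<open>For a real distribution P, rdt P y l interpolates linearly between
  P{..<y} (at l = 1) and cdf P y (at l = 0).\<close>

definition rdt :: "real measure \<Rightarrow> real \<Rightarrow> real \<Rightarrow> real" where
  "rdt P y l = cdf P y - measure P {y} * l"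

definition rdt_kernel :: "real measure \<Rightarrow> real \<Rightarrow> (real \<times> real) measure" where
  "rdt_kernel P y = distr unif01 (borel \<Otimes>\<^sub>M borel) (\<lambda>l. (rdt P y l, y))"

context
  fixes P :: "real measure"
  assumes P: "real_distribution P"
begin

interpretation P: cdf_distribution P
  using P by (simp add: cdf_distribution_def)

lemma measurable_rdt [measurable (raw)]:
  "f \<in> M \<rightarrow>\<^sub>M borel \<Longrightarrow> g \<in> M \<rightarrow>\<^sub>M borel \<Longrightarrow> (\<lambda>x. rdt P (f x) (g x)) \<in> M \<rightarrow>\<^sub>M borel"
  unfolding rdt_def
  by (intro borel_measurable_diff borel_measurable_times
      measurable_compose[OF _ measurable_cdf[OF P]] measurable_compose[OF _ measurable_atom[OF P]])

lemma rdt_le_cdf: "0 \<le> l \<Longrightarrow> rdt P y l \<le> cdf P y"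
  unfolding rdt_def by simp

lemma lessThan_le_rdt: "l \<le> 1 \<Longrightarrow> measure P {..<y} \<le> rdt P y l"
  unfolding rdt_def using cdf_eq_lessThan_plus_atom[OF P, of y]
  by (simp add: mult_left_le)

lemma emeasure_rdt_le_above:
  assumes "cdf P y \<le> a"
  shows "emeasure unif01 {l. rdt P y l \<le> a} = 1"
proof -
  have "{l. rdt P y l \<le> a} \<inter> {0<..<1} = {0<..<1}"
    using assms by (auto intro!: order_trans[OF rdt_le_cdf])
  thus ?thesis by (simp add: emeasure_unif01)
qed

lemma emeasure_rdt_le_below:
  assumes "a < measure P {..<y}"
  shows "emeasure unif01 {l. rdt P y l \<le> a} = 0"
proof -
  have "{l. rdt P y l \<le> a} \<inter> {0<..<1} = {}"
  proof safe
    fix l assume "rdt P y l \<le> a" "l \<in> {0<..<1}"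
    thus "l \<in> {}" using lessThan_le_rdt[of l y] assms by simp
  qed
  thus ?thesis by (simp add: emeasure_unif01)
qed

lemma emeasure_rdt_le_atom:
  assumes "measure P {..<y} \<le> a" "a \<le> cdf P y"
  shows "emeasure unif01 {l. rdt P y l \<le> a} * ennreal (measure P {y}) = ennreal (a - measure P {..<y})"
proof (cases "measure P {y} = 0")
  case True
  then show ?thesis using assms cdf_eq_lessThan_plus_atom[OF P, of y] by simp
next
  case False
  hence atom: "0 < measure P {y}" using measure_nonneg[of P "{y}"] by linarith
  define c where "c = (cdf P y - a) / measure P {y}"
  have c: "0 \<le> c" "c \<le> 1"
    using assms atom cdf_eq_lessThan_plus_atom[OF P, of y] by (auto simp: c_def field_simps)
  have "emeasure unif01 {l. rdt P y l \<le> a} = emeasure lborel ({l. rdt P y l \<le> a} \<inter> {0<..<1})"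
    by (simp add: emeasure_unif01)
  also have "\<dots> = emeasure lborel {c..<1}"
  proof (rule emeasure_eq_AE)
    have "rdt P y x \<le> a \<longleftrightarrow> c \<le> x" for x
      unfolding rdt_def c_def using atom by (simp add: field_simps)
    thus "AE x in lborel. (x \<in> {l. rdt P y l \<le> a} \<inter> {0<..<1}) = (x \<in> {c..<1})"
      using c by (intro AE_mp[OF AE_lborel_singleton[of 0] AE_I2]) auto
  qed auto
  also have "\<dots> = ennreal (1 - c)" using c by simp
  finally have "emeasure unif01 {l. rdt P y l \<le> a} * ennreal (measure P {y})
      = ennreal ((1 - c) * measure P {y})"
    using c atom by (simp add: ennreal_mult)
  also have "(1 - c) * measure P {y} = a - measure P {..<y}"
    using atom cdf_eq_lessThan_plus_atom[OF P, of y] by (simp add: c_def field_simps)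
  finally show ?thesis .
qed

text \<open>Below the quantile s of level a the transform is certainly
  at most a, above it certainly larger, and at s the atom contributes exactly
  the missing mass.\<close>

lemma rdt_joint_cdf_interior:
  assumes a: "0 < a" "a < cdf P b"
  shows "(\<integral>\<^sup>+ y. indicator {..b} y * emeasure unif01 {l. rdt P y l \<le> a} \<partial>P) = ennreal a"
proof -
  have a1: "a < 1" using a P.cdf_bounded_prob[of b] by linarith
  define s where "s = quantile (cdf P) a"
  have sb: "s \<le> b" unfolding s_def using quantile_le[OF P a(1) a1 a(2)] .
  have below_s: "cdf P x \<le> a" if "x < s" for x
    using quantile_le[OF P a(1) a1, of x] that unfolding s_def by fastforce
  have above_s: "a < measure P {..<x}" if sx: "s < x" for x
  proof -
    have ne: "{x. a < cdf P x} \<noteq> {}" using a(2) by blast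
    obtain e where e: "a < cdf P e" "e < x"
      using cInf_lessD[OF ne, of x] sx[unfolded s_def quantile_def] by auto
    have "cdf P e \<le> measure P {..<x}"
      unfolding cdf_def by (rule P.finite_measure_mono) (use e in auto)
    thus ?thesis using e by simp
  qed
  have at_s: "a \<le> cdf P s"
    using le_cdf_if_quantile_le[OF P a(1) a1, of s] unfolding s_def by simp
  have left_s: "measure P {..<s} \<le> a"
    using P.cdf_at_left[of s] by (rule tendsto_upperbound)
      (auto simp: eventually_at_left_field intro!: exI[of _ "s - 1"] below_s)
  define w where "w = emeasure unif01 {l. rdt P s l \<le> a}"
  have split: "indicator {..b} y * emeasure unif01 {l. rdt P y l \<le> a}
      = indicator {..<s} y + w * indicator {s} y" for y :: real
  proof -
    consider "y < s" | "y = s" | "s < y" by linarith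
    thus ?thesis
      by cases (use sb emeasure_rdt_le_above[OF below_s] emeasure_rdt_le_below[OF above_s] in
          \<open>auto simp: indicator_def w_def\<close>)
  qed
  have "(\<integral>\<^sup>+ y. indicator {..b} y * emeasure unif01 {l. rdt P y l \<le> a} \<partial>P)
      = emeasure P {..<s} + w * emeasure P {s}"
    unfolding split by (subst nn_integral_add) (auto simp: nn_integral_cmult_indicator)
  also have "\<dots> = ennreal (measure P {..<s}) + ennreal (a - measure P {..<s})"
    unfolding w_def by (simp add: P.emeasure_eq_measure emeasure_rdt_le_atom[OF left_s at_s])
  also have "\<dots> = ennreal a"
    using left_s by (subst ennreal_plus[symmetric]) auto
  finally show ?thesis .
qed

text \<open>The general case: at levels a \<ge> cdf P b the event is just Y \<le> b, and at levels a \<le> 0 the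
  probability vanishes, squeezed by monotonicity in a between 0 and the interior values.\<close>

lemma rdt_joint_cdf:
  "(\<integral>\<^sup>+ y. indicator {..b} y * emeasure unif01 {l. rdt P y l \<le> a} \<partial>P) = ennreal (max 0 (min a (cdf P b)))"
    (is "?I a = _")
proof -
  have mono: "?I a \<le> ?I a'" if "a \<le> a'" for a a'
    using that by (intro nn_integral_mono mult_left_mono emeasure_mono) auto
  have above: "?I a' = ennreal (cdf P b)" if "cdf P b \<le> a'" for a'
  proof -
    have "indicator {..b} y * emeasure unif01 {l. rdt P y l \<le> a'} = indicator {..b} y" for y
      using emeasure_rdt_le_above[OF order_trans[OF P.cdf_nondecreasing that], of y]
      by (cases "y \<le> b") auto
    hence "?I a' = emeasure P {..b}" by simp
    thus ?thesis by (simp add: cdf_def P.emeasure_eq_measure)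
  qed
  consider "cdf P b \<le> a" | "0 < a" "a < cdf P b" | "a \<le> 0" "a < cdf P b" by linarith
  then show ?thesis
  proof cases
    case 1
    thus ?thesis using above P.cdf_nonneg[of b] by simp
  next
    case 2
    thus ?thesis using rdt_joint_cdf_interior by simp
  next
    case 3
    have "?I a \<le> 0 + ennreal e" if "0 < e" for e
    proof (cases "cdf P b = 0")
      case True
      have "?I a \<le> ?I (cdf P b)" using 3 by (intro mono) simp
      also have "\<dots> = 0" using above[of "cdf P b"] True by simp
      finally show ?thesis by simp
    next
      case False
      define e' where "e' = min e (cdf P b / 2)"
      have e': "0 < e'" "e' < cdf P b" "a \<le> e'" "e' \<le> e"
        using 3 False P.cdf_nonneg[of b] \<open>0 < e\<close> by (auto simp: e'_def)
      have "?I a \<le> ?I e'" by (rule mono) fact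
      also have "\<dots> = ennreal e'" by (rule rdt_joint_cdf_interior) fact+
      finally show ?thesis using e' by (simp add: order_trans[OF _ ennreal_leI])
    qed
    hence "?I a \<le> 0" by (rule ennreal_le_epsilon)
    thus ?thesis using 3 by simp
  qed
qed

lemma quantile_joint_cdf:
  "emeasure (distr unif01 (borel \<Otimes>\<^sub>M borel) (\<lambda>u. (u, quantile (cdf P) u))) ({..a} \<times> {..b})
   = ennreal (max 0 (min a (cdf P b)))"
proof -
  have ms [measurable]: "{u. u \<le> a \<and> quantile (cdf P) u \<le> b} \<in> sets borel"
    using measurable_quantile[OF P] by measurable
  let ?c = "cdf P b"
  have c: "0 \<le> ?c" "?c \<le> 1" using P.cdf_nonneg P.cdf_bounded_prob by auto
  have [measurable]: "(\<lambda>u. (u, quantile (cdf P) u)) \<in> unif01 \<rightarrow>\<^sub>M borel \<Otimes>\<^sub>M borel"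
    using measurable_quantile[OF P] by measurable
  have "emeasure (distr unif01 (borel \<Otimes>\<^sub>M borel) (\<lambda>u. (u, quantile (cdf P) u))) ({..a} \<times> {..b})
      = emeasure unif01 {u. u \<le> a \<and> quantile (cdf P) u \<le> b}"
    by (subst emeasure_distr) (auto intro!: arg_cong2[where f=emeasure])
  also have "\<dots> = emeasure lborel ({u. u \<le> a \<and> quantile (cdf P) u \<le> b} \<inter> {0<..<1})"
    by (simp add: emeasure_unif01)
  also have "\<dots> = emeasure lborel ({0<..<1} \<inter> {..a} \<inter> {..<?c})"
    by (rule emeasure_eq_AE)
      (use quantile_le_iff[OF P] in \<open>auto intro!: AE_mp[OF AE_lborel_singleton[of ?c] AE_I2]\<close>)
  also have "\<dots> = ennreal (max 0 (min a ?c))"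
  proof (cases "a < ?c")
    case True
    hence "{0<..<1} \<inter> {..a} \<inter> {..<?c} = {0<..a}" using c by auto
    thus ?thesis using True by (cases "0 \<le> a") (simp_all add: max_def min_def)
  next
    case False
    hence "{0<..<1} \<inter> {..a} \<inter> {..<?c} = {0<..<?c}" using c by auto
    thus ?thesis using False c by (simp add: max_def min_def)
  qed
  finally show ?thesis .
qed

lemma measurable_rdt_kernel: "rdt_kernel P \<in> borel \<rightarrow>\<^sub>M prob_algebra (borel \<Otimes>\<^sub>M borel)"
proof -
  have "(\<lambda>(y, l). (rdt P y l, y)) \<in> borel \<Otimes>\<^sub>M borel \<rightarrow>\<^sub>M borel \<Otimes>\<^sub>M borel"
    using measurable_rdt by measurable
  thus ?thesis
    unfolding rdt_kernel_def[abs_def]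
    by (intro measurable_distr_prob_space2[OF measurable_const_unif01]) simp
qed

lemma emeasure_bind_rdt_kernel:
  "emeasure (P \<bind> rdt_kernel P) ({..a} \<times> {..b})
   = (\<integral>\<^sup>+ y. indicator {..b} y * emeasure unif01 {l. rdt P y l \<le> a} \<partial>P)"
proof -
  have [measurable]: "(\<lambda>l. (rdt P y l, y)) \<in> unif01 \<rightarrow>\<^sub>M borel \<Otimes>\<^sub>M borel" for y
    using measurable_rdt by measurable
  have "emeasure (rdt_kernel P y) ({..a} \<times> {..b}) = indicator {..b} y * emeasure unif01 {l. rdt P y l \<le> a}" for y
    unfolding rdt_kernel_def by (subst emeasure_distr) (auto simp: indicator_def vimage_def)
  moreover have "emeasure (P \<bind> rdt_kernel P) ({..a} \<times> {..b}) = (\<integral>\<^sup>+ y. emeasure (rdt_kernel P y) ({..a} \<times> {..b}) \<partial>P)"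
    by (rule emeasure_bind)
      (auto intro: measurable_prob_algebraD[OF measurable_rdt_kernel] cong: measurable_cong_sets)
  ultimately show ?thesis by simp
qed

theorem rdt_quantile_coupling:
  "P \<bind> rdt_kernel P = distr unif01 (borel \<Otimes>\<^sub>M borel) (\<lambda>u. (u, quantile (cdf P) u))"
proof (rule measure_eqI_quadrants)
  show "sets (P \<bind> rdt_kernel P) = sets (borel \<Otimes>\<^sub>M borel)"
    by (rule sets_bind) (auto simp: rdt_kernel_def)
qed (simp_all add: emeasure_bind_rdt_kernel rdt_joint_cdf quantile_joint_cdf)

lemma rdt_transfer:
  assumes v [measurable]: "case_prod v \<in> borel_measurable (borel \<Otimes>\<^sub>M borel)"
  shows "(\<integral>\<^sup>+ u. v u (quantile (cdf P) u) \<partial>unif01) = (\<integral>\<^sup>+ y. \<integral>\<^sup>+ l. v (rdt P y l) y \<partial>unif01 \<partial>P)"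
proof -
  have [measurable]: "(\<lambda>u. (u, quantile (cdf P) u)) \<in> unif01 \<rightarrow>\<^sub>M borel \<Otimes>\<^sub>M borel"
    using measurable_quantile[OF P] by measurable
  have [measurable]: "(\<lambda>l. (rdt P y l, y)) \<in> unif01 \<rightarrow>\<^sub>M borel \<Otimes>\<^sub>M borel" for y
    using measurable_rdt by measurable
  have "(\<integral>\<^sup>+ u. v u (quantile (cdf P) u) \<partial>unif01)
      = (\<integral>\<^sup>+ z. case_prod v z \<partial>distr unif01 (borel \<Otimes>\<^sub>M borel) (\<lambda>u. (u, quantile (cdf P) u)))"
    by (subst nn_integral_distr) auto
  also have "\<dots> = (\<integral>\<^sup>+ z. case_prod v z \<partial>(P \<bind> rdt_kernel P))"
    by (simp add: rdt_quantile_coupling)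
  also have "\<dots> = (\<integral>\<^sup>+ y. \<integral>\<^sup>+ z. case_prod v z \<partial>rdt_kernel P y \<partial>P)"
    by (rule nn_integral_bind[OF v])
      (auto intro: measurable_prob_algebraD[OF measurable_rdt_kernel] cong: measurable_cong_sets)
  also have "\<dots> = (\<integral>\<^sup>+ y. \<integral>\<^sup>+ l. v (rdt P y l) y \<partial>unif01 \<partial>P)"
    unfolding rdt_kernel_def by (intro nn_integral_cong, subst nn_integral_distr) auto
  finally show ?thesis .
qed

corollary rdt_uniform:
  assumes [measurable]: "h \<in> borel_measurable borel"
  shows "(\<integral>\<^sup>+ y. \<integral>\<^sup>+ l. h (rdt P y l) \<partial>unif01 \<partial>P) = (\<integral>\<^sup>+ u. h u \<partial>unif01)"
  using rdt_transfer[of "\<lambda>u y. h u"] by simp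

end

lemma rdt_pair_transfer:
  assumes P1: "real_distribution P1" and P2: "real_distribution P2"
    and W [measurable]: "case_prod W \<in> borel_measurable ((borel \<Otimes>\<^sub>M borel) \<Otimes>\<^sub>M (borel \<Otimes>\<^sub>M borel))"
  shows "(\<integral>\<^sup>+ t. W t (quantile (cdf P1) (fst t), quantile (cdf P2) (snd t)) \<partial>UU)
       = (\<integral>\<^sup>+ z. \<integral>\<^sup>+ l'. \<integral>\<^sup>+ l. W (rdt P1 (fst z) l', rdt P2 (snd z) l) z \<partial>unif01 \<partial>unif01 \<partial>(P1 \<Otimes>\<^sub>M P2))"
proof -
  interpret P1: real_distribution P1 by (rule P1)
  interpret P2: real_distribution P2 by (rule P2)
  interpret UP2: pair_prob_space unif01 P2
    by (intro pair_prob_spaceI prob_space_unif01 P2.prob_space_axioms)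
  note [measurable] = measurable_quantile[OF P1] measurable_quantile[OF P2]
    measurable_rdt[OF P1] measurable_rdt[OF P2]
  let ?Q1 = "quantile (cdf P1)" and ?Q2 = "quantile (cdf P2)"
  have "(\<integral>\<^sup>+ t. W t (?Q1 (fst t), ?Q2 (snd t)) \<partial>UU)
      = (\<integral>\<^sup>+ th. \<integral>\<^sup>+ ph. W (th, ph) (?Q1 th, ?Q2 ph) \<partial>unif01 \<partial>unif01)"
    by (subst U.nn_integral_fst[symmetric]) (simp_all cong: measurable_cong_sets)
  also have "\<dots> = (\<integral>\<^sup>+ th. \<integral>\<^sup>+ y. \<integral>\<^sup>+ l. W (th, rdt P2 y l) (?Q1 th, y) \<partial>unif01 \<partial>P2 \<partial>unif01)"
    by (intro nn_integral_cong rdt_transfer[OF P2]) measurable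
  also have "\<dots> = (\<integral>\<^sup>+ x. \<integral>\<^sup>+ l'. \<integral>\<^sup>+ y. \<integral>\<^sup>+ l. W (rdt P1 x l', rdt P2 y l) (x, y) \<partial>unif01 \<partial>P2 \<partial>unif01 \<partial>P1)"
    by (rule rdt_transfer[OF P1, where v="\<lambda>th x. \<integral>\<^sup>+ y. \<integral>\<^sup>+ l. W (th, rdt P2 y l) (x, y) \<partial>unif01 \<partial>P2"])
      measurable
  also have "\<dots> = (\<integral>\<^sup>+ x. \<integral>\<^sup>+ y. \<integral>\<^sup>+ l'. \<integral>\<^sup>+ l. W (rdt P1 x l', rdt P2 y l) (x, y) \<partial>unif01 \<partial>unif01 \<partial>P2 \<partial>P1)"
  proof (intro nn_integral_cong)
    fix x
    have m: "(\<lambda>(l', y). \<integral>\<^sup>+ l. W (rdt P1 x l', rdt P2 y l) (x, y) \<partial>unif01) \<in> borel_measurable (borel \<Otimes>\<^sub>M borel)"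
      by measurable
    show "(\<integral>\<^sup>+ l'. \<integral>\<^sup>+ y. \<integral>\<^sup>+ l. W (rdt P1 x l', rdt P2 y l) (x, y) \<partial>unif01 \<partial>P2 \<partial>unif01)
        = (\<integral>\<^sup>+ y. \<integral>\<^sup>+ l'. \<integral>\<^sup>+ l. W (rdt P1 x l', rdt P2 y l) (x, y) \<partial>unif01 \<partial>unif01 \<partial>P2)"
      by (rule UP2.Fubini'[symmetric])
        (use m in \<open>simp cong: measurable_cong_sets[OF sets_pair_measure_cong[OF sets_unif01 P2.events_eq_borel]]\<close>)
  qed
  also have "\<dots> = (\<integral>\<^sup>+ z. \<integral>\<^sup>+ l'. \<integral>\<^sup>+ l. W (rdt P1 (fst z) l', rdt P2 (snd z) l) z \<partial>unif01 \<partial>unif01 \<partial>(P1 \<Otimes>\<^sub>M P2))"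
    by (subst P2.nn_integral_fst[symmetric]) (simp_all cong: measurable_cong_sets)
  finally show ?thesis .
qed

section \<open>Joint laws described by a kernel in the first coordinate\<close>

definition mix_kernel :: "real measure \<Rightarrow> (real \<Rightarrow> real measure) \<Rightarrow> (real \<times> real) measure" where
  "mix_kernel \<mu> \<kappa> = \<mu> \<bind> (\<lambda>ph. \<kappa> ph \<bind> (\<lambda>th. return (borel \<Otimes>\<^sub>M borel) (th, ph)))"

lemma real_distribution_kernel:
  "\<kappa> \<in> borel \<rightarrow>\<^sub>M prob_algebra borel \<Longrightarrow> real_distribution (\<kappa> x)"
  using measurable_space[of \<kappa> borel "prob_algebra borel" x]
  by (simp add: space_prob_algebra real_distribution_def real_distribution_axioms_def)

context
  fixes \<mu> :: "real measure" and \<kappa> :: "real \<Rightarrow> real measure"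
  assumes sets_\<mu>: "sets \<mu> = sets borel"
    and \<kappa> [measurable]: "\<kappa> \<in> borel \<rightarrow>\<^sub>M prob_algebra borel"
begin

lemma sets_kernel_value: "sets (\<kappa> ph) = sets borel"
  using real_distribution_kernel[OF \<kappa>] by (simp add: real_distribution.events_eq_borel)

lemma measurable_mix_kernel_fibre:
  "(\<lambda>ph. \<kappa> ph \<bind> (\<lambda>th. return (borel \<Otimes>\<^sub>M borel) (th, ph))) \<in> \<mu> \<rightarrow>\<^sub>M subprob_algebra (borel \<Otimes>\<^sub>M borel)"
proof -
  have "(\<lambda>ph. \<kappa> ph \<bind> (\<lambda>th. return (borel \<Otimes>\<^sub>M borel) (th, ph))) \<in> borel \<rightarrow>\<^sub>M prob_algebra (borel \<Otimes>\<^sub>M borel)"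
    by measurable
  thus ?thesis
    by (simp add: measurable_prob_algebraD sets_\<mu> cong: measurable_cong_sets)
qed

lemma sets_mix_kernel: "sets (mix_kernel \<mu> \<kappa>) = sets (borel \<Otimes>\<^sub>M borel)"
  unfolding mix_kernel_def
  by (rule sets_bind[where N="borel \<Otimes>\<^sub>M borel"])
    (auto simp: sets_kernel[OF measurable_mix_kernel_fibre] sets_eq_imp_space_eq[OF sets_\<mu>])

lemma nn_integral_mix_kernel:
  assumes h [measurable]: "h \<in> borel_measurable (borel \<Otimes>\<^sub>M borel)"
  shows "(\<integral>\<^sup>+ z. h z \<partial>mix_kernel \<mu> \<kappa>) = (\<integral>\<^sup>+ ph. \<integral>\<^sup>+ th. h (th, ph) \<partial>\<kappa> ph \<partial>\<mu>)"
  unfolding mix_kernel_def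
proof (subst nn_integral_bind[OF h measurable_mix_kernel_fibre], intro nn_integral_cong)
  fix ph
  have "(\<lambda>th. return (borel \<Otimes>\<^sub>M borel) (th, ph)) \<in> \<kappa> ph \<rightarrow>\<^sub>M subprob_algebra (borel \<Otimes>\<^sub>M borel)"
    by (simp add: sets_kernel_value cong: measurable_cong_sets)
  thus "(\<integral>\<^sup>+ z. h z \<partial>(\<kappa> ph \<bind> (\<lambda>th. return (borel \<Otimes>\<^sub>M borel) (th, ph)))) = (\<integral>\<^sup>+ th. h (th, ph) \<partial>\<kappa> ph)"
    by (subst nn_integral_bind[OF h]) (auto simp: nn_integral_return space_pair_measure intro!: nn_integral_cong)
qed

lemma emeasure_mix_kernel_Times:
  assumes [measurable]: "A \<in> sets borel" "B \<in> sets borel"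
  shows "emeasure (mix_kernel \<mu> \<kappa>) (A \<times> B) = (\<integral>\<^sup>+ ph. emeasure (\<kappa> ph) A * indicator B ph \<partial>\<mu>)"
proof -
  have "emeasure (mix_kernel \<mu> \<kappa>) (A \<times> B) = (\<integral>\<^sup>+ z. indicator (A \<times> B) z \<partial>mix_kernel \<mu> \<kappa>)"
    by (simp add: sets_mix_kernel)
  also have "\<dots> = (\<integral>\<^sup>+ ph. \<integral>\<^sup>+ th. indicator B ph * indicator A th \<partial>\<kappa> ph \<partial>\<mu>)"
    by (subst nn_integral_mix_kernel) (auto intro!: nn_integral_cong simp: indicator_def)
  also have "\<dots> = (\<integral>\<^sup>+ ph. emeasure (\<kappa> ph) A * indicator B ph \<partial>\<mu>)"
    by (intro nn_integral_cong, subst nn_integral_cmult_indicator) (simp_all add: sets_kernel_value mult.commute)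
  finally show ?thesis .
qed

end

lemma mix_kernel_unique_AE:
  assumes \<mu>: "prob_space \<mu>" "sets \<mu> = sets borel"
    and \<kappa>1 [measurable]: "\<kappa>1 \<in> borel \<rightarrow>\<^sub>M prob_algebra borel"
    and \<kappa>2 [measurable]: "\<kappa>2 \<in> borel \<rightarrow>\<^sub>M prob_algebra borel"
    and eq: "mix_kernel \<mu> \<kappa>1 = mix_kernel \<mu> \<kappa>2"
    and A [measurable]: "A \<in> sets borel"
  shows "AE ph in \<mu>. emeasure (\<kappa>1 ph) A = emeasure (\<kappa>2 ph) A"
proof -
  interpret prob_space \<mu> by (rule \<mu>(1))
  have m: "(\<lambda>ph. emeasure (\<kappa> ph) A) \<in> borel_measurable \<mu>"
    if "\<kappa> \<in> borel \<rightarrow>\<^sub>M prob_algebra borel" for \<kappa>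
    using measurable_compose[OF measurable_prob_algebraD[OF that] measurable_emeasure_subprob_algebra] A
    by (simp add: \<mu>(2) cong: measurable_cong_sets)
  have "density \<mu> (\<lambda>ph. emeasure (\<kappa>1 ph) A) = density \<mu> (\<lambda>ph. emeasure (\<kappa>2 ph) A)"
  proof (rule measure_eqI)
    fix B assume "B \<in> sets (density \<mu> (\<lambda>ph. emeasure (\<kappa>1 ph) A))"
    hence [measurable]: "B \<in> sets borel" by (simp add: \<mu>(2))
    show "emeasure (density \<mu> (\<lambda>ph. emeasure (\<kappa>1 ph) A)) B = emeasure (density \<mu> (\<lambda>ph. emeasure (\<kappa>2 ph) A)) B"
      using emeasure_mix_kernel_Times[OF \<mu>(2) \<kappa>1, of A B] emeasure_mix_kernel_Times[OF \<mu>(2) \<kappa>2, of A B] eq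
      by (simp add: emeasure_density m[OF \<kappa>1] m[OF \<kappa>2] \<mu>(2))
  qed simp
  thus ?thesis by (intro density_unique m \<kappa>1 \<kappa>2)
qed

text \<open>A c.d.f.\ is determined by its values at rational points (right continuity).\<close>

lemma cdf_eqI_Rats:
  assumes M: "real_distribution M" and N: "real_distribution N"
    and eq: "\<And>r. r \<in> \<rat> \<Longrightarrow> cdf M r = cdf N r"
  shows "cdf M x = cdf N x"
proof -
  interpret M: real_distribution M by (rule M)
  interpret N: real_distribution N by (rule N)
  let ?F = "at x within ({x<..} \<inter> \<rat>)"
  have "x islimpt ({x<..} \<inter> \<rat>)"
  proof (rule islimpt_approachable[THEN iffD2], intro allI impI)
    fix e :: real assume "0 < e"
    then obtain r where "r \<in> \<rat>" "x < r" "r < x + e"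
      using Rats_dense_in_real[of x "x + e"] by auto
    thus "\<exists>x'\<in>{x<..} \<inter> \<rat>. x' \<noteq> x \<and> dist x' x < e"
      by (intro bexI[of _ r]) (auto simp: dist_real_def)
  qed
  hence nontrivial: "?F \<noteq> bot"
    by (simp add: trivial_limit_within)
  have lim: "(cdf M \<longlongrightarrow> cdf M x) ?F" "(cdf N \<longlongrightarrow> cdf N x) ?F"
    using M.cdf_is_right_cont[of x] N.cdf_is_right_cont[of x]
    by (auto simp: continuous_within intro: tendsto_within_subset)
  have "\<forall>\<^sub>F y in ?F. cdf M y = cdf N y"
    by (auto simp: eventually_at_filter eq)
  hence "(cdf M \<longlongrightarrow> cdf N x) ?F"
    using lim(2) by (rule tendsto_cong[THEN iffD2])
  thus ?thesis
    using tendsto_unique[OF nontrivial lim(1)] by blast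
qed

section \<open>Disintegrating a density on the unit square\<close>

text \<open>For a density g on the unit square, cond_mass g ph is the total mass of the section at
  ph, and cond_kernel g ph is the normalized section (a fixed law where the mass is not 1).\<close>

definition cond_mass :: "(real \<times> real \<Rightarrow> ennreal) \<Rightarrow> real \<Rightarrow> ennreal" where
  "cond_mass g ph = (\<integral>\<^sup>+ th. g (th, ph) \<partial>unif01)"

definition cond_kernel :: "(real \<times> real \<Rightarrow> ennreal) \<Rightarrow> real \<Rightarrow> real measure" where
  "cond_kernel g ph = (if cond_mass g ph = 1 then density unif01 (\<lambda>th. g (th, ph)) else unif01)"

context
  fixes g :: "real \<times> real \<Rightarrow> ennreal"
  assumes g [measurable]: "g \<in> borel_measurable (borel \<Otimes>\<^sub>M borel)"
begin

lemma measurable_cond_mass [measurable]: "cond_mass g \<in> borel_measurable borel"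
  unfolding cond_mass_def[abs_def] by measurable

lemma emeasure_cond_kernel:
  "A \<in> sets borel \<Longrightarrow> emeasure (cond_kernel g ph) A =
     (if cond_mass g ph = 1 then (\<integral>\<^sup>+ th. g (th, ph) * indicator A th \<partial>unif01) else emeasure unif01 A)"
  unfolding cond_kernel_def by (simp add: emeasure_density)

lemma prob_space_cond_kernel: "prob_space (cond_kernel g ph)"
proof (cases "cond_mass g ph = 1")
  case True
  show ?thesis
    by (rule prob_spaceI) (use True in \<open>simp add: cond_kernel_def cond_mass_def emeasure_density\<close>)
qed (simp add: cond_kernel_def prob_space_unif01)

lemma measurable_cond_kernel [measurable]: "cond_kernel g \<in> borel \<rightarrow>\<^sub>M prob_algebra borel"
proof (rule measurable_prob_algebraI)
  show "cond_kernel g \<in> borel \<rightarrow>\<^sub>M subprob_algebra borel"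
  proof (rule measurable_subprob_algebra)
    show "subprob_space (cond_kernel g ph)" for ph
      by (rule prob_space_imp_subprob_space[OF prob_space_cond_kernel])
  next
    fix A :: "real set" assume [measurable]: "A \<in> sets borel"
    have "(\<lambda>ph. if cond_mass g ph = 1 then (\<integral>\<^sup>+ th. g (th, ph) * indicator A th \<partial>unif01)
        else emeasure unif01 A) \<in> borel_measurable borel"
      by measurable
    thus "(\<lambda>ph. emeasure (cond_kernel g ph) A) \<in> borel_measurable borel"
      by (simp add: emeasure_cond_kernel)
  qed (simp add: cond_kernel_def)
qed (rule prob_space_cond_kernel)

text \<open>The conditional laws have no atoms, being absolutely continuous w.r.t.\ U.\<close>

lemma cond_kernel_atomless: "measure (cond_kernel g ph) {t} = 0"
proof -
  have "AE th in unif01. g (th, ph) * indicator {t} th = 0"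
    by (rule AE_I'[of "{t}"]) (auto simp: indicator_def)
  hence "(\<integral>\<^sup>+ th. g (th, ph) * indicator {t} th \<partial>unif01) = 0"
    by (simp add: nn_integral_0_iff_AE)
  thus ?thesis by (simp add: measure_def emeasure_cond_kernel)
qed

lemma nn_integral_density_UU:
  assumes [measurable]: "h \<in> borel_measurable (borel \<Otimes>\<^sub>M borel)"
  shows "(\<integral>\<^sup>+ z. h z \<partial>density UU g) = (\<integral>\<^sup>+ ph. \<integral>\<^sup>+ th. g (th, ph) * h (th, ph) \<partial>unif01 \<partial>unif01)"
proof -
  have "(\<integral>\<^sup>+ z. h z \<partial>density UU g) = (\<integral>\<^sup>+ z. g z * h z \<partial>UU)"
    by (rule nn_integral_density) (simp_all cong: measurable_cong_sets)
  also have "\<dots> = (\<integral>\<^sup>+ ph. \<integral>\<^sup>+ th. g (th, ph) * h (th, ph) \<partial>unif01 \<partial>unif01)"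
    by (subst UU.nn_integral_snd[symmetric]) (simp_all cong: measurable_cong_sets)
  finally show ?thesis .
qed

context
  assumes marginal: "distr (density UU g) borel snd = unif01"
begin

lemma cond_mass_AE: "AE ph in unif01. cond_mass g ph = 1"
proof -
  have "density unif01 (cond_mass g) = density unif01 (\<lambda>_. 1)"
  proof (rule measure_eqI)
    fix B assume "B \<in> sets (density unif01 (cond_mass g))"
    hence [measurable]: "B \<in> sets borel" by simp
    have "emeasure (density unif01 (cond_mass g)) B
        = (\<integral>\<^sup>+ ph. \<integral>\<^sup>+ th. g (th, ph) * indicator (UNIV \<times> B) (th, ph) \<partial>unif01 \<partial>unif01)"
      unfolding cond_mass_def
      by (subst emeasure_density) (auto intro!: nn_integral_cong
          simp: nn_integral_multc[symmetric] indicator_def)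
    also have "\<dots> = emeasure (distr (density UU g) borel snd) B"
      by (subst emeasure_distr) (auto simp: nn_integral_density_UU[symmetric] space_pair_measure
          intro!: arg_cong2[where f=emeasure] cong: measurable_cong_sets)
    finally show "emeasure (density unif01 (cond_mass g)) B = emeasure (density unif01 (\<lambda>_. 1)) B"
      by (simp add: marginal emeasure_density)
  qed simp
  thus ?thesis by (intro U.density_unique) simp_all
qed

lemma mix_cond_kernel: "mix_kernel unif01 (cond_kernel g) = density UU g"
proof (rule measure_eqI)
  show "sets (mix_kernel unif01 (cond_kernel g)) = sets (density UU g)"
    by (simp add: sets_mix_kernel sets_UU)
  fix A assume "A \<in> sets (mix_kernel unif01 (cond_kernel g))"
  hence [measurable]: "A \<in> sets (borel \<Otimes>\<^sub>M borel)" by (simp add: sets_mix_kernel)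
  have "emeasure (mix_kernel unif01 (cond_kernel g)) A
      = (\<integral>\<^sup>+ ph. \<integral>\<^sup>+ th. indicator A (th, ph) \<partial>cond_kernel g ph \<partial>unif01)"
    by (simp add: nn_integral_mix_kernel[symmetric] sets_mix_kernel)
  also have "\<dots> = (\<integral>\<^sup>+ ph. \<integral>\<^sup>+ th. g (th, ph) * indicator A (th, ph) \<partial>unif01 \<partial>unif01)"
    by (rule nn_integral_cong_AE)
      (use cond_mass_AE in \<open>eventually_elim, simp add: cond_kernel_def nn_integral_density\<close>)
  also have "\<dots> = emeasure (density UU g) A"
    by (simp add: nn_integral_density_UU[symmetric] sets_UU)
  finally show "emeasure (mix_kernel unif01 (cond_kernel g)) A = emeasure (density UU g) A" .
qed

lemma kernel_cdf_continuous_AE: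
  assumes \<kappa> [measurable]: "\<kappa> \<in> borel \<rightarrow>\<^sub>M prob_algebra borel"
    and rep: "mix_kernel unif01 \<kappa> = density UU g"
  shows "AE ph in unif01. continuous_on UNIV (cdf (\<kappa> ph))"
proof -
  have "AE ph in unif01. \<forall>r::rat. emeasure (\<kappa> ph) {..real_of_rat r} = emeasure (cond_kernel g ph) {..real_of_rat r}"
    unfolding AE_all_countable
    by (intro allI mix_kernel_unique_AE prob_space_unif01) (simp_all add: rep mix_cond_kernel)
  then show ?thesis
  proof (rule AE_mp, intro AE_I2 impI)
    fix ph
    assume eq: "\<forall>r::rat. emeasure (\<kappa> ph) {..real_of_rat r} = emeasure (cond_kernel g ph) {..real_of_rat r}"
    have distributions: "real_distribution (\<kappa> ph)" "real_distribution (cond_kernel g ph)"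
      by (simp_all add: real_distribution_kernel)
    have "cdf (\<kappa> ph) x = cdf (cond_kernel g ph) x" for x
      by (rule cdf_eqI_Rats[OF distributions]) (use eq in \<open>auto elim!: Rats_cases simp: cdf_def measure_def\<close>)
    hence "cdf (\<kappa> ph) = cdf (cond_kernel g ph)" by blast
    interpret C: real_distribution "cond_kernel g ph" by (rule distributions(2))
    show "continuous_on UNIV (cdf (\<kappa> ph))"
      using \<open>cdf (\<kappa> ph) = cdf (cond_kernel g ph)\<close> C.isCont_cdf cond_kernel_atomless
      by (simp add: continuous_at_imp_continuous_on)
  qed
qed

end

end

section \<open>Channels and their normalization\<close>

lemma emeasure_distr_nn_integral:
  assumes "f \<in> M \<rightarrow>\<^sub>M N" "A \<in> sets N"
  shows "emeasure (distr M N f) A = (\<integral>\<^sup>+ x. indicator A (f x) \<partial>M)"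
  using assms by (simp add: nn_integral_distr[symmetric] nn_integral_indicator)

locale channel =
  fixes PX :: "real measure" and K :: "real \<Rightarrow> real measure"
  assumes prob_space_PX: "prob_space PX" and sets_PX: "sets PX = sets borel"
    and kernel: "K \<in> borel \<rightarrow>\<^sub>M prob_algebra borel"
begin

abbreviation PY :: "real measure" where "PY \<equiv> output_dist PX K"
abbreviation J :: "(real \<times> real) measure" where "J \<equiv> joint_dist PX K"
abbreviation NJ :: "(real \<times> real) measure" where "NJ \<equiv> norm_joint PX K"

lemma measurable_K [measurable]: "K \<in> borel \<rightarrow>\<^sub>M prob_algebra borel"
  by (rule kernel)

lemma sets_K [measurable_cong]: "sets (K x) = sets borel"
  using real_distribution_kernel[OF kernel] by (simp add: real_distribution.events_eq_borel)

lemma prob_space_K: "prob_space (K x)"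
  using real_distribution_kernel[OF kernel] by (simp add: real_distribution_def)

lemma measurable_K_PX: "K \<in> PX \<rightarrow>\<^sub>M subprob_algebra borel"
  using measurable_prob_algebraD[OF kernel] by (simp add: sets_PX cong: measurable_cong_sets)

lemma real_distribution_PX: "real_distribution PX"
  using prob_space_PX sets_PX by (simp add: real_distribution_def real_distribution_axioms_def)

lemma sets_PY [measurable_cong]: "sets PY = sets borel"
  unfolding output_dist_def
  by (rule sets_bind[OF sets_K]) (simp add: sets_eq_imp_space_eq[OF sets_PX])

lemma real_distribution_PY: "real_distribution PY"
  using prob_space.prob_space_bind[OF prob_space_PX _ measurable_K_PX] prob_space_K sets_PY
  by (simp add: output_dist_def real_distribution_def real_distribution_axioms_def)

lemma nn_integral_PY:
  assumes [measurable]: "h \<in> borel_measurable borel"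
  shows "(\<integral>\<^sup>+ y. h y \<partial>PY) = (\<integral>\<^sup>+ x. \<integral>\<^sup>+ y. h y \<partial>K x \<partial>PX)"
  unfolding output_dist_def by (rule nn_integral_bind[OF _ measurable_K_PX]) simp

lemma measurable_joint_fibre:
  "(\<lambda>x. K x \<bind> (\<lambda>y. return (borel \<Otimes>\<^sub>M borel) (x, y))) \<in> PX \<rightarrow>\<^sub>M subprob_algebra (borel \<Otimes>\<^sub>M borel)"
proof -
  have "(\<lambda>x. K x \<bind> (\<lambda>y. return (borel \<Otimes>\<^sub>M borel) (x, y))) \<in> borel \<rightarrow>\<^sub>M prob_algebra (borel \<Otimes>\<^sub>M borel)"
    by measurable
  thus ?thesis by (simp add: measurable_prob_algebraD sets_PX cong: measurable_cong_sets)
qed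

lemma sets_J [measurable_cong]: "sets J = sets (borel \<Otimes>\<^sub>M borel)"
  unfolding joint_dist_def
  by (rule sets_bind[where N="borel \<Otimes>\<^sub>M borel"])
    (auto simp: sets_kernel[OF measurable_joint_fibre] sets_eq_imp_space_eq[OF sets_PX])

lemma nn_integral_J:
  assumes H [measurable]: "H \<in> borel_measurable (borel \<Otimes>\<^sub>M borel)"
  shows "(\<integral>\<^sup>+ z. H z \<partial>J) = (\<integral>\<^sup>+ x. \<integral>\<^sup>+ y. H (x, y) \<partial>K x \<partial>PX)"
  unfolding joint_dist_def
proof (subst nn_integral_bind[OF H measurable_joint_fibre], intro nn_integral_cong)
  fix x
  have "(\<lambda>y. return (borel \<Otimes>\<^sub>M borel) (x, y)) \<in> K x \<rightarrow>\<^sub>M subprob_algebra (borel \<Otimes>\<^sub>M borel)"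
    by measurable
  thus "(\<integral>\<^sup>+ z. H z \<partial>(K x \<bind> (\<lambda>y. return (borel \<Otimes>\<^sub>M borel) (x, y)))) = (\<integral>\<^sup>+ y. H (x, y) \<partial>K x)"
    by (subst nn_integral_bind[OF H]) (auto simp: nn_integral_return space_pair_measure intro!: nn_integral_cong)
qed

lemma distr_J_fst: "distr J borel fst = PX"
proof (rule measure_eqI)
  fix A assume "A \<in> sets (distr J borel fst)"
  hence [measurable]: "A \<in> sets borel" by simp
  have "emeasure (distr J borel fst) A = (\<integral>\<^sup>+ x. \<integral>\<^sup>+ y. indicator A x \<partial>K x \<partial>PX)"
    by (simp add: emeasure_distr_nn_integral nn_integral_J)
  also have "\<dots> = emeasure PX A"
    using prob_space.emeasure_space_1[OF prob_space_K] by (simp add: sets_PX)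
  finally show "emeasure (distr J borel fst) A = emeasure PX A" .
qed (simp add: sets_PX)

lemma distr_J_snd: "distr J borel snd = PY"
proof (rule measure_eqI)
  fix A assume "A \<in> sets (distr J borel snd)"
  hence [measurable]: "A \<in> sets borel" by simp
  have "emeasure (distr J borel snd) A = (\<integral>\<^sup>+ z. indicator A (snd z) \<partial>J)"
    by (simp add: emeasure_distr_nn_integral)
  also have "\<dots> = (\<integral>\<^sup>+ x. \<integral>\<^sup>+ y. indicator A y \<partial>K x \<partial>PX)"
    by (simp add: nn_integral_J)
  also have "\<dots> = (\<integral>\<^sup>+ y. indicator A y \<partial>PY)"
    by (rule nn_integral_PY[symmetric]) simp
  also have "\<dots> = emeasure PY A"
    by (simp add: sets_PY)
  finally show "emeasure (distr J borel snd) A = emeasure PY A" .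
qed (simp add: sets_PY)

lemma norm_joint_rdt:
  "NJ = unif01 \<bind> (\<lambda>th. K (quantile (cdf PX) th) \<bind> (\<lambda>y. unif01 \<bind> (\<lambda>l.
     return (borel \<Otimes>\<^sub>M borel) (th, rdt PY y l))))"
  unfolding norm_joint_def rdt_def ..

lemmas [measurable] = measurable_quantile[OF real_distribution_PX] measurable_quantile[OF real_distribution_PY]
lemmas [measurable (raw)] = measurable_rdt[OF real_distribution_PX] measurable_rdt[OF real_distribution_PY]

lemma measurable_norm_joint_fibre:
  "(\<lambda>th. K (quantile (cdf PX) th) \<bind> (\<lambda>y. unif01 \<bind> (\<lambda>l. return (borel \<Otimes>\<^sub>M borel) (th, rdt PY y l))))
     \<in> unif01 \<rightarrow>\<^sub>M subprob_algebra (borel \<Otimes>\<^sub>M borel)"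
proof -
  have "(\<lambda>th. K (quantile (cdf PX) th) \<bind> (\<lambda>y. unif01 \<bind> (\<lambda>l. return (borel \<Otimes>\<^sub>M borel) (th, rdt PY y l))))
     \<in> borel \<rightarrow>\<^sub>M prob_algebra (borel \<Otimes>\<^sub>M borel)"
    by measurable
  thus ?thesis by (simp add: measurable_prob_algebraD cong: measurable_cong_sets)
qed

lemma sets_NJ [measurable_cong]: "sets NJ = sets (borel \<Otimes>\<^sub>M borel)"
  unfolding norm_joint_rdt
  by (rule sets_bind[where N="borel \<Otimes>\<^sub>M borel"]) (auto simp: sets_kernel[OF measurable_norm_joint_fibre])

lemma nn_integral_NJ:
  assumes H [measurable]: "H \<in> borel_measurable (borel \<Otimes>\<^sub>M borel)"
  shows "(\<integral>\<^sup>+ z. H z \<partial>NJ)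
    = (\<integral>\<^sup>+ th. \<integral>\<^sup>+ y. \<integral>\<^sup>+ l. H (th, rdt PY y l) \<partial>unif01 \<partial>K (quantile (cdf PX) th) \<partial>unif01)"
  unfolding norm_joint_rdt
proof (subst nn_integral_bind[OF H measurable_norm_joint_fibre], intro nn_integral_cong)
  fix th :: real
  have fibre: "(\<lambda>y. unif01 \<bind> (\<lambda>l. return (borel \<Otimes>\<^sub>M borel) (th, rdt PY y l)))
      \<in> K (quantile (cdf PX) th) \<rightarrow>\<^sub>M subprob_algebra (borel \<Otimes>\<^sub>M borel)"
  proof -
    have "(\<lambda>y. unif01 \<bind> (\<lambda>l. return (borel \<Otimes>\<^sub>M borel) (th, rdt PY y l))) \<in> borel \<rightarrow>\<^sub>M prob_algebra (borel \<Otimes>\<^sub>M borel)"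
      by measurable
    thus ?thesis by (simp add: measurable_prob_algebraD cong: measurable_cong_sets)
  qed
  have point: "(\<lambda>l. return (borel \<Otimes>\<^sub>M borel) (th, rdt PY y l)) \<in> unif01 \<rightarrow>\<^sub>M subprob_algebra (borel \<Otimes>\<^sub>M borel)" for y
    by measurable
  show "(\<integral>\<^sup>+ z. H z \<partial>(K (quantile (cdf PX) th) \<bind> (\<lambda>y. unif01 \<bind> (\<lambda>l. return (borel \<Otimes>\<^sub>M borel) (th, rdt PY y l)))))
      = (\<integral>\<^sup>+ y. \<integral>\<^sup>+ l. H (th, rdt PY y l) \<partial>unif01 \<partial>K (quantile (cdf PX) th))"
    by (subst nn_integral_bind[OF H fibre], intro nn_integral_cong, subst nn_integral_bind[OF H point])
      (auto simp: nn_integral_return space_pair_measure intro!: nn_integral_cong)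
qed

text \<open>The normalized pair has the law of (rdt P_X X L', rdt P_Y Y L) for (X, Y) ~ P_XY and
  independent uniform L', L: the coupling replaces Theta by a randomized transform of
  X = Q_X(Theta).\<close>

theorem normalized_joint_transform:
  assumes H [measurable]: "H \<in> borel_measurable (borel \<Otimes>\<^sub>M borel)"
  shows "(\<integral>\<^sup>+ z. H z \<partial>NJ)
    = (\<integral>\<^sup>+ z. \<integral>\<^sup>+ l'. \<integral>\<^sup>+ l. H (rdt PX (fst z) l', rdt PY (snd z) l) \<partial>unif01 \<partial>unif01 \<partial>J)"
proof -
  define V where "V th x = (\<integral>\<^sup>+ y. \<integral>\<^sup>+ l. H (th, rdt PY y l) \<partial>unif01 \<partial>K x)" for th x
  have [measurable]: "(\<lambda>(th, x). V th x) \<in> borel_measurable (borel \<Otimes>\<^sub>M borel)"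
  proof -
    have inner: "(\<lambda>(z, y). \<integral>\<^sup>+ l. H (fst z, rdt PY y l) \<partial>unif01) \<in> borel_measurable ((borel \<Otimes>\<^sub>M borel) \<Otimes>\<^sub>M borel)"
      by measurable
    have "(\<lambda>z. K (snd z)) \<in> borel \<Otimes>\<^sub>M borel \<rightarrow>\<^sub>M subprob_algebra borel"
      by (rule measurable_compose[OF measurable_snd measurable_prob_algebraD[OF kernel]])
    from nn_integral_measurable_subprob_algebra2[OF inner this]
    show ?thesis unfolding V_def by (simp add: case_prod_beta')
  qed
  have "(\<integral>\<^sup>+ z. H z \<partial>NJ) = (\<integral>\<^sup>+ th. V th (quantile (cdf PX) th) \<partial>unif01)"
    unfolding nn_integral_NJ[OF H] V_def ..
  also have "\<dots> = (\<integral>\<^sup>+ x. \<integral>\<^sup>+ l'. V (rdt PX x l') x \<partial>unif01 \<partial>PX)"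
    by (rule rdt_transfer[OF real_distribution_PX]) measurable
  also have "\<dots> = (\<integral>\<^sup>+ x. \<integral>\<^sup>+ y. \<integral>\<^sup>+ l'. \<integral>\<^sup>+ l. H (rdt PX x l', rdt PY y l) \<partial>unif01 \<partial>unif01 \<partial>K x \<partial>PX)"
  proof (intro nn_integral_cong)
    fix x
    interpret UK: pair_prob_space unif01 "K x"
      by (intro pair_prob_spaceI prob_space_unif01 prob_space_K)
    have "(\<lambda>(l', y). \<integral>\<^sup>+ l. H (rdt PX x l', rdt PY y l) \<partial>unif01) \<in> borel_measurable (unif01 \<Otimes>\<^sub>M K x)"
      by (simp cong: measurable_cong_sets add: sets_K) measurable
    thus "(\<integral>\<^sup>+ l'. V (rdt PX x l') x \<partial>unif01)
        = (\<integral>\<^sup>+ y. \<integral>\<^sup>+ l'. \<integral>\<^sup>+ l. H (rdt PX x l', rdt PY y l) \<partial>unif01 \<partial>unif01 \<partial>K x)"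
      unfolding V_def by (rule UK.Fubini'[symmetric])
  qed
  also have "\<dots> = (\<integral>\<^sup>+ z. \<integral>\<^sup>+ l'. \<integral>\<^sup>+ l. H (rdt PX (fst z) l', rdt PY (snd z) l) \<partial>unif01 \<partial>unif01 \<partial>J)"
    by (subst nn_integral_J) simp_all
  finally show ?thesis .
qed

lemma distr_NJ_fst: "distr NJ borel fst = unif01"
proof (rule measure_eqI)
  fix A assume "A \<in> sets (distr NJ borel fst)"
  hence [measurable]: "A \<in> sets borel" by simp
  have "emeasure (distr NJ borel fst) A = (\<integral>\<^sup>+ z. \<integral>\<^sup>+ l'. indicator A (rdt PX (fst z) l') \<partial>unif01 \<partial>J)"
    by (simp add: emeasure_distr_nn_integral normalized_joint_transform)
  also have "\<dots> = (\<integral>\<^sup>+ x. \<integral>\<^sup>+ l'. indicator A (rdt PX x l') \<partial>unif01 \<partial>distr J borel fst)"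
    by (rule nn_integral_distr[symmetric]) measurable
  also have "\<dots> = (\<integral>\<^sup>+ x. \<integral>\<^sup>+ l'. indicator A (rdt PX x l') \<partial>unif01 \<partial>PX)"
    by (simp only: distr_J_fst)
  also have "\<dots> = emeasure unif01 A"
    by (simp add: rdt_uniform[OF real_distribution_PX])
  finally show "emeasure (distr NJ borel fst) A = emeasure unif01 A" .
qed simp

lemma distr_NJ_snd: "distr NJ borel snd = unif01"
proof (rule measure_eqI)
  fix A assume "A \<in> sets (distr NJ borel snd)"
  hence [measurable]: "A \<in> sets borel" by simp
  have "emeasure (distr NJ borel snd) A = (\<integral>\<^sup>+ z. \<integral>\<^sup>+ l. indicator A (rdt PY (snd z) l) \<partial>unif01 \<partial>J)"
    by (simp add: emeasure_distr_nn_integral normalized_joint_transform)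
  also have "\<dots> = (\<integral>\<^sup>+ y. \<integral>\<^sup>+ l. indicator A (rdt PY y l) \<partial>unif01 \<partial>distr J borel snd)"
    by (rule nn_integral_distr[symmetric]) measurable
  also have "\<dots> = (\<integral>\<^sup>+ y. \<integral>\<^sup>+ l. indicator A (rdt PY y l) \<partial>unif01 \<partial>PY)"
    by (simp only: distr_J_snd)
  also have "\<dots> = emeasure unif01 A"
    by (simp add: rdt_uniform[OF real_distribution_PY])
  finally show "emeasure (distr NJ borel snd) A = emeasure unif01 A" .
qed simp

lemma prob_space_NJ: "prob_space NJ"
proof
  have "emeasure NJ (space NJ) = emeasure (distr NJ borel fst) UNIV"
    by (subst emeasure_distr) (auto simp: sets_eq_imp_space_eq[OF sets_NJ] space_pair_measure)
  thus "emeasure NJ (space NJ) = 1" by (simp add: distr_NJ_fst)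
qed

lemma NJ_unit_square: "emeasure NJ ({0<..<1} \<times> {0<..<1}) = 1"
proof (rule prob_space.emeasure_eq_1_AE[OF prob_space_NJ])
  have [measurable]: "fst \<in> NJ \<rightarrow>\<^sub>M borel" "snd \<in> NJ \<rightarrow>\<^sub>M borel"
    by simp_all
  have "AE z in NJ. 0 < fst z \<and> fst z < 1"
    using AE_unif01 unfolding distr_NJ_fst[symmetric] by (subst (asm) AE_distr_iff) auto
  moreover have "AE z in NJ. 0 < snd z \<and> snd z < 1"
    using AE_unif01 unfolding distr_NJ_snd[symmetric] by (subst (asm) AE_distr_iff) auto
  ultimately show "AE z in NJ. z \<in> {0<..<1} \<times> {0<..<1}"
    by eventually_elim (auto simp: mem_Times_iff)
qed (simp add: sets_NJ)

end

section \<open>Channels with finite mutual information\<close>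

locale channel_finite_MI = channel +
  assumes finite_MI: "mutual_info (joint_dist PX K) < \<infinity>"
begin

abbreviation PXPY :: "(real \<times> real) measure" where "PXPY \<equiv> PX \<Otimes>\<^sub>M PY"

interpretation XY: pair_prob_space PX PY
  by (intro pair_prob_spaceI prob_space_PX real_distribution.axioms(1)[OF real_distribution_PY])

lemma sets_PXPY [measurable_cong]: "sets PXPY = sets (borel \<Otimes>\<^sub>M borel)"
  by (rule sets_pair_measure_cong) (simp_all add: sets_PX sets_PY)

lemma mutual_info_J: "mutual_info J = KL_div J PXPY"
  unfolding mutual_info_def distr_J_fst distr_J_snd ..

lemma absolutely_continuous_J: "absolutely_continuous PXPY J"
  using finite_MI unfolding mutual_info_J KL_div_def by (auto split: if_splits)

definition info_density :: "real \<times> real \<Rightarrow> ennreal" where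
  "info_density = RN_deriv PXPY J"

lemma measurable_info_density [measurable]: "info_density \<in> borel_measurable (borel \<Otimes>\<^sub>M borel)"
  unfolding info_density_def using borel_measurable_RN_deriv[of PXPY J]
  by (simp cong: measurable_cong_sets)

lemma nn_integral_J_info_density:
  "G \<in> borel_measurable (borel \<Otimes>\<^sub>M borel) \<Longrightarrow> (\<integral>\<^sup>+ z. G z \<partial>J) = (\<integral>\<^sup>+ z. info_density z * G z \<partial>PXPY)"
  unfolding info_density_def
  by (rule XY.RN_deriv_nn_integral[OF absolutely_continuous_J])
    (simp_all add: sets_J sets_PXPY cong: measurable_cong_sets)

definition norm_density :: "real \<times> real \<Rightarrow> ennreal" where
  "norm_density t = info_density (quantile (cdf PX) (fst t), quantile (cdf PY) (snd t))"

lemma measurable_norm_density [measurable]: "norm_density \<in> borel_measurable (borel \<Otimes>\<^sub>M borel)"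
  unfolding norm_density_def[abs_def] by measurable

theorem NJ_density: "NJ = density UU norm_density"
proof (rule measure_eqI)
  fix A assume "A \<in> sets NJ"
  hence [measurable]: "A \<in> sets (borel \<Otimes>\<^sub>M borel)" by (simp add: sets_NJ)
  define k where "k z = (\<integral>\<^sup>+ l'. \<integral>\<^sup>+ l. indicator A (rdt PX (fst z) l', rdt PY (snd z) l) \<partial>unif01 \<partial>unif01)" for z
  have [measurable]: "k \<in> borel_measurable (borel \<Otimes>\<^sub>M borel)"
    unfolding k_def[abs_def] by measurable
  have pull_out: "info_density z * k z
      = (\<integral>\<^sup>+ l'. \<integral>\<^sup>+ l. info_density z * indicator A (rdt PX (fst z) l', rdt PY (snd z) l) \<partial>unif01 \<partial>unif01)" for z
  proof -
    have "info_density z * k z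
        = (\<integral>\<^sup>+ l'. info_density z * \<integral>\<^sup>+ l. indicator A (rdt PX (fst z) l', rdt PY (snd z) l) \<partial>unif01 \<partial>unif01)"
      unfolding k_def by (rule nn_integral_cmult[symmetric]) measurable
    also have "\<dots> = (\<integral>\<^sup>+ l'. \<integral>\<^sup>+ l. info_density z * indicator A (rdt PX (fst z) l', rdt PY (snd z) l) \<partial>unif01 \<partial>unif01)"
      by (intro nn_integral_cong nn_integral_cmult[symmetric]) measurable
    finally show ?thesis .
  qed
  have "emeasure NJ A = (\<integral>\<^sup>+ z. k z \<partial>J)"
    unfolding k_def by (simp add: normalized_joint_transform[symmetric] sets_NJ)
  also have "\<dots> = (\<integral>\<^sup>+ z. info_density z * k z \<partial>PXPY)"
    by (simp add: nn_integral_J_info_density)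
  also have "\<dots> = (\<integral>\<^sup>+ t. info_density (quantile (cdf PX) (fst t), quantile (cdf PY) (snd t)) * indicator A t \<partial>UU)"
    unfolding pull_out
    by (rule rdt_pair_transfer[OF real_distribution_PX real_distribution_PY, symmetric]) measurable
  also have "\<dots> = emeasure (density UU norm_density) A"
    by (simp add: emeasure_density norm_density_def sets_UU)
  finally show "emeasure NJ A = emeasure (density UU norm_density) A" .
qed (simp add: sets_NJ sets_UU)

lemma absolutely_continuous_NJ: "absolutely_continuous UU NJ"
  unfolding NJ_density by (rule absolutely_continuousI_density) (simp cong: measurable_cong_sets)

lemma nn_integral_RN_deriv_NJ:
  assumes [measurable]: "\<phi> \<in> borel_measurable (borel :: real measure)"
  shows "(\<integral>\<^sup>+ t. ennreal (\<phi> (enn2real (RN_deriv UU NJ t))) \<partial>UU)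
       = (\<integral>\<^sup>+ z. ennreal (\<phi> (enn2real (RN_deriv PXPY J z))) \<partial>PXPY)"
proof -
  have "AE t in UU. norm_density t = RN_deriv UU NJ t"
    by (rule UU.RN_deriv_unique) (simp_all add: NJ_density cong: measurable_cong_sets)
  hence "(\<integral>\<^sup>+ t. ennreal (\<phi> (enn2real (RN_deriv UU NJ t))) \<partial>UU)
      = (\<integral>\<^sup>+ t. ennreal (\<phi> (enn2real (norm_density t))) \<partial>UU)"
    by (intro nn_integral_cong_AE) (auto elim: AE_mp)
  also have "\<dots> = (\<integral>\<^sup>+ z. \<integral>\<^sup>+ l'. \<integral>\<^sup>+ l. ennreal (\<phi> (enn2real (info_density z))) \<partial>unif01 \<partial>unif01 \<partial>PXPY)"
    unfolding norm_density_def
    by (rule rdt_pair_transfer[OF real_distribution_PX real_distribution_PY]) measurable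
  finally show ?thesis by (simp add: info_density_def)
qed

theorem mutual_info_NJ: "mutual_info NJ = mutual_info J"
proof -
  have "mutual_info NJ = KL_div NJ UU"
    unfolding mutual_info_def distr_NJ_fst distr_NJ_snd ..
  also have "\<dots> = KL_div J PXPY"
    unfolding KL_div_def Let_def using absolutely_continuous_J absolutely_continuous_NJ
    by (simp add: nn_integral_RN_deriv_NJ[of "\<lambda>t. t * ln t"] nn_integral_RN_deriv_NJ[of "\<lambda>t. - (t * ln t)"])
  finally show ?thesis unfolding mutual_info_J .
qed

lemma absolutely_continuous_lborel_NJ: "absolutely_continuous (lborel \<Otimes>\<^sub>M lborel) NJ"
  using absolutely_continuous_lborel_UU absolutely_continuous_NJ
  unfolding absolutely_continuous_def by blast

lemma marginal_norm_density: "distr (density UU norm_density) borel snd = unif01"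
  using distr_NJ_snd unfolding NJ_density .

lemma conditional_kernel_exists:
  "\<exists>\<kappa>. \<kappa> \<in> borel \<rightarrow>\<^sub>M prob_algebra borel \<and> NJ = mix_kernel unif01 \<kappa>"
proof (intro exI conjI)
  show "cond_kernel norm_density \<in> borel \<rightarrow>\<^sub>M prob_algebra borel"
    by (rule measurable_cond_kernel[OF measurable_norm_density])
  show "NJ = mix_kernel unif01 (cond_kernel norm_density)"
    unfolding NJ_density by (rule mix_cond_kernel[OF measurable_norm_density marginal_norm_density, symmetric])
qed

lemma conditional_cdf_continuous:
  "\<kappa> \<in> borel \<rightarrow>\<^sub>M prob_algebra borel \<Longrightarrow> NJ = mix_kernel unif01 \<kappa> \<Longrightarrow>
   AE ph in unif01. continuous_on UNIV (cdf (\<kappa> ph))"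
  unfolding NJ_density
  by (rule kernel_cdf_continuous_AE[OF measurable_norm_density marginal_norm_density]) simp_all

end

theorem mainTheorem8:
  fixes PX :: "real measure" and K :: "real \<Rightarrow> real measure"
  assumes PX: "prob_space PX" "sets PX = sets borel"
    and K: "K \<in> borel \<rightarrow>\<^sub>M prob_algebra borel"
    and finiteMI: "mutual_info (joint_dist PX K) < \<infinity>"
  shows "(distr (norm_joint PX K) borel snd = unif01)
    \<and> (mutual_info (norm_joint PX K) = mutual_info (joint_dist PX K))
    \<and> (absolutely_continuous (lborel \<Otimes>\<^sub>M lborel) (norm_joint PX K)
         \<and> emeasure (norm_joint PX K) ({0<..<1} \<times> {0<..<1}) = 1)
    \<and> ((\<exists>\<kappa>. \<kappa> \<in> borel \<rightarrow>\<^sub>M prob_algebra borel \<and>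
            norm_joint PX K = distr (norm_joint PX K) borel snd \<bind>
              (\<lambda>ph. \<kappa> ph \<bind> (\<lambda>th. return (borel \<Otimes>\<^sub>M borel) (th, ph))))
         \<and> (\<forall>\<kappa>. \<kappa> \<in> borel \<rightarrow>\<^sub>M prob_algebra borel \<and>
            norm_joint PX K = distr (norm_joint PX K) borel snd \<bind>
              (\<lambda>ph. \<kappa> ph \<bind> (\<lambda>th. return (borel \<Otimes>\<^sub>M borel) (th, ph)))
            \<longrightarrow> (AE ph in distr (norm_joint PX K) borel snd.
                   continuous_on UNIV (\<lambda>th. cdf (\<kappa> ph) th))))"
proof -
  interpret channel_finite_MI PX K
    by (intro channel_finite_MI.intro channel.intro channel_finite_MI_axioms.intro PX K finiteMI)
  show ?thesis
    unfolding distr_NJ_snd mix_kernel_def[symmetric]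
    using mutual_info_NJ absolutely_continuous_lborel_NJ NJ_unit_square
      conditional_kernel_exists conditional_cdf_continuous
    by blast
qed

end
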